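(* Let $n,k$ be positive integers with $\gcd(n,k)=1$. (a) Let $N=3n+k$ and suppose $n+k\neq N/2$. Then the geometric realization of $C(n,n,n+k)$ is homeomorphic to a cylinder if $N$ is even and to a Möbius band if $N$ is odd. (b) Let $N=3n+2k$. Then the geometric realization of $C(n,n+k,n+k)$ is homeomorphic to a cylinder if $N$ is even and to a Möbius band if $N$ is odd.
   Context: For positive integers $n_1\le n_2\le n_3$ with $N=n_1+n_2+n_3$, $C(n_1,n_2,n_3)$ denotes the abstract simplicial complex whose vertex set is $\mathbb{Z}/N$, whose 2-simplices are all sets of the form $\{k,k+n_1,k+n_1+n_2\}$ or $\{k,k-n_1,k-n_1-n_2\}$ for $k\in\mathbb{Z}/N$ (the orbit of $\{0,n_1,n_1+n_2\}$ under translations and inversions of $\mathbb{Z}/N$), and whose 1-simplices are all sets $\{k,k+n_i\}$ with $k\in\mathbb{Z}/N$, $i\in\{1,2,3\}$. Cylinder means $S^1\times[0,1]$. *)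

theory Defs
  imports "HOL-Analysis.Analysis"
begin

text \<open>Vertices of Z/N are represented by the integers 0..N-1 (residues k mod N).\<close>

definition circ_complex :: "nat \<Rightarrow> nat \<Rightarrow> nat \<Rightarrow> int set set" where
  "circ_complex n1 n2 n3 =
    (let N = int (n1 + n2 + n3) in
      {{k mod N} | k. True}
    \<union> {{k mod N, (k + int ni) mod N} | k ni. ni \<in> {n1, n2, n3}}
    \<union> {{k mod N, (k + int n1) mod N, (k + int n1 + int n2) mod N} | k. True}
    \<union> {{k mod N, (k - int n1) mod N, (k - int n1 - int n2) mod N} | k. True})"

text \<open>Standard geometric realization of an abstract simplicial complex with (finite)
  simplices given as vertex sets: points are barycentric coordinate functions
  supported on some simplex, with the (product) topology of functions to the reals.\<close>

definition geom_real :: "'v set set \<Rightarrow> ('v \<Rightarrow> real) set" where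
  "geom_real K = {f. \<exists>\<sigma>\<in>K. (\<forall>v. v \<notin> \<sigma> \<longrightarrow> f v = 0) \<and> (\<forall>v. 0 \<le> f v) \<and> sum f \<sigma> = 1}"

definition cylinder :: "(complex \<times> real) set" where
  "cylinder = sphere 0 1 \<times> {0..1}"

definition moebius_band :: "(real \<times> real \<times> real) set" where
  "moebius_band = (\<lambda>(s, t). ((2 + t * cos (s / 2)) * cos s,
                              (2 + t * cos (s / 2)) * sin s,
                              t * sin (s / 2))) ` ({0..2 * pi} \<times> {-1..1})"

end

theory Submission
  imports Defs
begin

text \<open>Multiplying the vertex labels by a unit \<open>c\<close> of \<open>\<int>/N\<close> maps \<open>C(n\<^sub>1,n\<^sub>2,n\<^sub>3)\<close> onto
  \<open>C(m\<^sub>1,m\<^sub>2,m\<^sub>3)\<close> whenever \<open>c n\<^sub>i \<equiv> m\<^sub>i\<close>. After a cyclic rotation of the steps in (b), both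
  complexes are of the form \<open>C(a, a, N - 2a)\<close> with \<open>a\<close> coprime to \<open>N\<close>, and \<open>c = a\<^sup>-\<^sup>1\<close> turns them
  into \<open>C(1, 1, N - 2)\<close>, whose triangles are \<open>{v, v+1, v+2}\<close>. Placing vertex \<open>v\<close> at
  \<open>(v, v mod 2)\<close> makes these triangles a zigzag triangulation of \<open>\<real> \<times> [0,1]\<close> folded onto
  \<open>\<int>/N\<close>, and the shift \<open>v \<mapsto> v + N\<close> acts on the strip as \<open>(x, y) \<mapsto> (x + N, y)\<close> for even \<open>N\<close>
  and as \<open>(x, y) \<mapsto> (x + N, 1 - y)\<close> for odd \<open>N\<close>. Hence the realization is \<open>[0,N] \<times> [0,1]\<close> with
  its two ends glued straight or with a twist. The folding identifies nothing else as soon as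
  \<open>N \<ge> 5\<close>, which is where \<open>2(n + k) \<noteq> N\<close> is needed in (a).\<close>

lemma homeomorphic_images_same_fibres:
  fixes f :: "'a::t2_space \<Rightarrow> 'b::t2_space" and g :: "'a \<Rightarrow> 'c::t2_space"
  assumes D: "compact D" and cf: "continuous_on D f" and cg: "continuous_on D g"
    and fibres: "\<And>x y. x \<in> D \<Longrightarrow> y \<in> D \<Longrightarrow> f x = f y \<longleftrightarrow> g x = g y"
  shows "f ` D homeomorphic g ` D"
proof -
  define h where "h z = g (SOME x. x \<in> D \<and> f x = z)" for z
  have h_f: "h (f x) = g x" if "x \<in> D" for x
  proof -
    have "(SOME y. y \<in> D \<and> f y = f x) \<in> D \<and> f (SOME y. y \<in> D \<and> f y = f x) = f x"
      by (rule someI[of _ x]) (use that in auto)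
    then show ?thesis unfolding h_def using fibres that by blast
  qed
  have image: "h ` f ` D = g ` D" using h_f by (force simp: image_iff)
  have inj: "inj_on h (f ` D)" using h_f fibres by (auto simp: inj_on_def)
  have "continuous_on (f ` D) h"
    unfolding continuous_on_closed
  proof (intro allI impI)
    fix T assume T: "closedin (top_of_set (h ` f ` D)) T"
    have preimage: "f ` D \<inter> h -` T = f ` (D \<inter> g -` T)" using h_f by auto
    have "closedin (top_of_set D) (D \<inter> g -` T)"
      using continuous_on_closed cg T image by metis
    then show "closedin (top_of_set (f ` D)) (f ` D \<inter> h -` T)"
      unfolding preimage using Abstract_Topology_2.continuous_imp_closed_map[OF _ cf refl D] by blast
  qed
  then show ?thesis
    using homeomorphic_compact[OF compact_continuous_image[OF cf D] _ image inj] by blast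
qed

lemma continuous_on_fun_compose_right:
  "continuous_on S (\<lambda>f :: 'b \<Rightarrow> 'c::topological_space. f \<circ> r)"
proof (rule continuous_on_coordinatewise_then_product)
  fix i show "continuous_on S (\<lambda>f :: 'b \<Rightarrow> 'c. (f \<circ> r) i)"
    unfolding o_def by (rule continuous_on_subset[OF continuous_on_product_coordinates]) simp
qed

section \<open>Relabelling vertices\<close>

lemma geom_real_bij_image_iff:
  assumes "bij p"
  shows "g \<in> geom_real ((`) p ` K) \<longleftrightarrow> g \<circ> p \<in> geom_real K"
proof -
  have inj: "inj_on p A" for A using assms by (metis bij_is_inj inj_on_subset subset_UNIV)
  have surj: "range p = UNIV" using assms by (simp add: bij_is_surj)
  have "(\<forall>v. v \<notin> p ` \<sigma> \<longrightarrow> g v = 0) \<longleftrightarrow> (\<forall>w. w \<notin> \<sigma> \<longrightarrow> g (p w) = 0)" for \<sigma>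
    using surj inj_image_mem_iff[OF bij_is_inj[OF assms]] by (metis rangeE UNIV_I)
  moreover have "(\<forall>v. 0 \<le> g v) \<longleftrightarrow> (\<forall>w. 0 \<le> g (p w))"
    using surj by (metis rangeE UNIV_I)
  moreover have "sum g (p ` \<sigma>) = sum (g \<circ> p) \<sigma>" for \<sigma>
    by (rule sum.reindex[OF inj])
  ultimately show ?thesis unfolding geom_real_def by (simp add: image_iff)
qed

lemma geom_real_bij_image_homeomorphic:
  fixes p :: "'a \<Rightarrow> 'b"
  assumes "bij p"
  shows "geom_real ((`) p ` K) homeomorphic geom_real K"
proof -
  have p_inv: "(f \<circ> inv p) \<circ> p = f" "(g \<circ> p) \<circ> inv p = g"
    for f :: "'a \<Rightarrow> real" and g :: "'b \<Rightarrow> real"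
    using assms by (simp_all add: fun_eq_iff bij_is_inj bij_is_surj surj_f_inv_f)
  have "(\<lambda>g. g \<circ> p) ` geom_real ((`) p ` K) = geom_real K"
  proof (intro equalityI subsetI)
    fix f assume "f \<in> geom_real K"
    then show "f \<in> (\<lambda>g. g \<circ> p) ` geom_real ((`) p ` K)"
      by (intro image_eqI[where x = "f \<circ> inv p"]) (simp_all add: geom_real_bij_image_iff[OF assms] p_inv)
  qed (auto simp: geom_real_bij_image_iff[OF assms])
  moreover have "(\<lambda>f. f \<circ> inv p) ` geom_real K = geom_real ((`) p ` K)"
  proof (intro equalityI subsetI)
    fix g assume "g \<in> geom_real ((`) p ` K)"
    then show "g \<in> (\<lambda>f. f \<circ> inv p) ` geom_real K"
      by (intro image_eqI[where x = "g \<circ> p"]) (simp_all add: geom_real_bij_image_iff[OF assms] p_inv)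
  qed (auto simp: geom_real_bij_image_iff[OF assms] p_inv)
  ultimately have "homeomorphism (geom_real ((`) p ` K)) (geom_real K) (\<lambda>g. g \<circ> p) (\<lambda>f. f \<circ> inv p)"
    unfolding homeomorphism_def by (simp add: continuous_on_fun_compose_right p_inv)
  then show ?thesis unfolding homeomorphic_def by blast
qed

section \<open>Symmetries of the complexes \<open>C(n\<^sub>1,n\<^sub>2,n\<^sub>3)\<close>\<close>

lemma mem_circ_complex_iff:
  assumes "N = int (n1 + n2 + n3)"
  shows "\<sigma> \<in> circ_complex n1 n2 n3 \<longleftrightarrow>
      (\<exists>k. \<sigma> = {k mod N})
    \<or> (\<exists>k ni. ni \<in> {n1, n2, n3} \<and> \<sigma> = {k mod N, (k + int ni) mod N})
    \<or> (\<exists>k. \<sigma> = {k mod N, (k + int n1) mod N, (k + int n1 + int n2) mod N})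
    \<or> (\<exists>k. \<sigma> = {k mod N, (k - int n1) mod N, (k - int n1 - int n2) mod N})"
  unfolding circ_complex_def Let_def assms[symmetric] Un_iff mem_Collect_eq
  by (intro iffI; elim disjE exE conjE; blast)

lemma circ_complex_cases:
  assumes "\<sigma> \<in> circ_complex n1 n2 n3" and "N = int (n1 + n2 + n3)"
  obtains (vertex) k where "\<sigma> = {k mod N}"
    | (edge) k ni where "ni \<in> {n1, n2, n3}" "\<sigma> = {k mod N, (k + int ni) mod N}"
    | (up) k where "\<sigma> = {k mod N, (k + int n1) mod N, (k + int n1 + int n2) mod N}"
    | (down) k where "\<sigma> = {k mod N, (k - int n1) mod N, (k - int n1 - int n2) mod N}"
  using assms(1) unfolding mem_circ_complex_iff[OF assms(2)]
  by (elim disjE exE conjE) (metis that)+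

lemma circ_complex_rotate_subset: "circ_complex n1 n2 n3 \<subseteq> circ_complex n2 n3 n1"
proof
  fix \<sigma> assume \<sigma>: "\<sigma> \<in> circ_complex n1 n2 n3"
  define N where "N = int (n1 + n2 + n3)"
  have N': "N = int (n2 + n3 + n1)" by (simp add: N_def)
  note target = mem_circ_complex_iff[OF N', of \<sigma>]
  from \<sigma> N_def show "\<sigma> \<in> circ_complex n2 n3 n1"
  proof (cases rule: circ_complex_cases)
    case vertex then show ?thesis using target by blast
  next
    case (edge k ni)
    then have "ni \<in> {n2, n3, n1}" by auto
    then show ?thesis using edge target by blast
  next
    case (up k)
    have "(k + int n1 + int n2 + int n3) mod N = k mod N" by (simp add: N_def add.assoc)
    then have "\<sigma> = {(k + int n1) mod N, (k + int n1 + int n2) mod N, (k + int n1 + int n2 + int n3) mod N}"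
      using up by auto
    then show ?thesis using target by blast
  next
    case (down k)
    have "(k - int n1 - int n2 - int n3) mod N = k mod N" by (simp add: N_def diff_diff_eq)
    then have "\<sigma> = {(k - int n1) mod N, (k - int n1 - int n2) mod N, (k - int n1 - int n2 - int n3) mod N}"
      using down by auto
    then show ?thesis using target by blast
  qed
qed

lemma circ_complex_rotate: "circ_complex n1 n2 n3 = circ_complex n2 n3 n1"
  using circ_complex_rotate_subset[of n1 n2 n3] circ_complex_rotate_subset[of n2 n3 n1]
    circ_complex_rotate_subset[of n3 n1 n2] by blast

text \<open>The identity outside \<open>0, \<dots>, N - 1\<close> makes this a permutation of \<open>int\<close> when \<open>c\<close> is a unit.\<close>

definition mult_residues :: "int \<Rightarrow> int \<Rightarrow> int \<Rightarrow> int" where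
  "mult_residues N c u = (if 0 \<le> u \<and> u < N then (c * u) mod N else u)"

lemma mult_residues_mod: "0 < N \<Longrightarrow> mult_residues N c (x mod N) = (c * x) mod N"
  unfolding mult_residues_def by (simp add: mod_mult_right_eq)

lemma mult_residues_inverse:
  assumes "0 < N" and "(c * d) mod N = 1 mod N"
  shows "mult_residues N c (mult_residues N d u) = u"
proof (cases "0 \<le> u \<and> u < N")
  case True
  then have "mult_residues N c (mult_residues N d u) = mult_residues N c ((d * u) mod N)"
    by (simp add: mult_residues_def)
  also have "\<dots> = ((c * d) * u) mod N" by (simp add: mult_residues_mod[OF assms(1)] ac_simps)
  also have "\<dots> = u mod N" using assms(2) by (metis mod_mult_left_eq mult_1)
  finally show ?thesis using True by simp
qed (auto simp: mult_residues_def)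

lemma bij_mult_residues:
  assumes "0 < N" and "(c * d) mod N = 1 mod N"
  shows "bij (mult_residues N c)"
proof (rule o_bij)
  show "mult_residues N c \<circ> mult_residues N d = id"
    using mult_residues_inverse[OF assms] by (simp add: fun_eq_iff)
  show "mult_residues N d \<circ> mult_residues N c = id"
    using mult_residues_inverse[of N d c] assms by (simp add: fun_eq_iff mult.commute)
qed

lemma mod_mult_add_cong:
  fixes c x y a b N :: int
  assumes "(c * x) mod N = y mod N" and "(c * a) mod N = b mod N"
  shows "(c * (x + a)) mod N = (y + b) mod N" "(c * (x - a)) mod N = (y - b) mod N"
  using mod_add_cong[OF assms] mod_diff_cong[OF assms] by (simp_all add: algebra_simps)

lemma mod_mult_by_inverse:
  fixes c d a b N :: int
  assumes "(c * d) mod N = 1 mod N" and "(c * a) mod N = b mod N"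
  shows "(d * b) mod N = a mod N"
proof -
  have "(d * b) mod N = (d * (c * a)) mod N" using assms(2) by (metis mod_mult_right_eq)
  also have "\<dots> = ((c * d) * a) mod N" by (simp add: ac_simps)
  also have "\<dots> = a mod N" using assms(1) by (metis mod_mult_left_eq mult_1)
  finally show ?thesis .
qed

lemma circ_complex_scale_subset:
  assumes N: "0 < N" "N = int (n1 + n2 + n3)" "N = int (m1 + m2 + m3)"
    and step: "(c * int n1) mod N = int m1 mod N" "(c * int n2) mod N = int m2 mod N"
      "(c * int n3) mod N = int m3 mod N"
  shows "(`) (mult_residues N c) ` circ_complex n1 n2 n3 \<subseteq> circ_complex m1 m2 m3"
proof
  fix \<tau> assume "\<tau> \<in> (`) (mult_residues N c) ` circ_complex n1 n2 n3"
  then obtain \<sigma> where \<sigma>: "\<sigma> \<in> circ_complex n1 n2 n3" and \<tau>: "\<tau> = mult_residues N c ` \<sigma>"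
    by blast
  note target = mem_circ_complex_iff[OF N(3), of \<tau>]
  note mult = mult_residues_mod[OF N(1)]
  have up1: "(c * (k + int n1)) mod N = (c * k + int m1) mod N"
    and down1: "(c * (k - int n1)) mod N = (c * k - int m1) mod N" for k
    using mod_mult_add_cong[OF refl step(1)] by blast+
  have up2: "(c * (k + int n1 + int n2)) mod N = (c * k + int m1 + int m2) mod N"
    and down2: "(c * (k - int n1 - int n2)) mod N = (c * k - int m1 - int m2) mod N" for k
    using mod_mult_add_cong(1)[OF up1 step(2)] mod_mult_add_cong(2)[OF down1 step(2)] by blast+
  from \<sigma> N(2) show "\<tau> \<in> circ_complex m1 m2 m3"
  proof (cases rule: circ_complex_cases)
    case (vertex k)
    then have "\<tau> = {(c * k) mod N}" using \<tau> by (simp add: mult)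
    then show ?thesis using target by blast
  next
    case (edge k ni)
    then obtain mi where "mi \<in> {m1, m2, m3}" "(c * int ni) mod N = int mi mod N" using step by blast
    moreover have "\<tau> = {(c * k) mod N, (c * (k + int ni)) mod N}" using edge \<tau> by (simp add: mult)
    ultimately have "mi \<in> {m1, m2, m3} \<and> \<tau> = {(c * k) mod N, (c * k + int mi) mod N}"
      using mod_mult_add_cong(1)[OF refl] by metis
    then show ?thesis using target by blast
  next
    case (up k)
    then have "\<tau> = {(c * k) mod N, (c * k + int m1) mod N, (c * k + int m1 + int m2) mod N}"
      using \<tau> by (simp add: mult up1 up2)
    then show ?thesis using target by blast
  next
    case (down k)
    then have "\<tau> = {(c * k) mod N, (c * k - int m1) mod N, (c * k - int m1 - int m2) mod N}"
      using \<tau> by (simp add: mult down1 down2)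
    then show ?thesis using target by blast
  qed
qed

lemma circ_complex_scale:
  assumes N: "0 < N" "N = int (n1 + n2 + n3)" "N = int (m1 + m2 + m3)"
    and inverse: "(c * d) mod N = 1 mod N"
    and step: "(c * int n1) mod N = int m1 mod N" "(c * int n2) mod N = int m2 mod N"
      "(c * int n3) mod N = int m3 mod N"
  shows "(`) (mult_residues N c) ` circ_complex n1 n2 n3 = circ_complex m1 m2 m3"
proof
  show "(`) (mult_residues N c) ` circ_complex n1 n2 n3 \<subseteq> circ_complex m1 m2 m3"
    by (rule circ_complex_scale_subset[OF N step])
  show "circ_complex m1 m2 m3 \<subseteq> (`) (mult_residues N c) ` circ_complex n1 n2 n3"
  proof
    fix \<tau> assume "\<tau> \<in> circ_complex m1 m2 m3"
    then have "mult_residues N d ` \<tau> \<in> circ_complex n1 n2 n3"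
      using circ_complex_scale_subset[OF N(1,3,2) mod_mult_by_inverse[OF inverse step(1)]
          mod_mult_by_inverse[OF inverse step(2)] mod_mult_by_inverse[OF inverse step(3)]]
      by blast
    moreover have "mult_residues N c ` mult_residues N d ` \<tau> = \<tau>"
      using mult_residues_inverse[OF N(1) inverse] by (simp add: image_image)
    ultimately show "\<tau> \<in> (`) (mult_residues N c) ` circ_complex n1 n2 n3" by (metis image_eqI)
  qed
qed

lemma mod_inverse_exists:
  fixes a N :: int
  assumes "coprime a N"
  obtains c where "(c * a) mod N = 1 mod N"
proof -
  have "gcd a N = 1" using assms by (simp add: coprime_iff_gcd_eq_1)
  then obtain u v where "u * a + v * N = 1" using bezout_int[of a N] by auto
  then have "u * a = 1 + (- v) * N" by (simp add: algebra_simps)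
  then have "(u * a) mod N = 1 mod N" by (simp only: mod_mult_self1)
  then show ?thesis by (rule that)
qed

lemma circ_complex_isosceles_relabel:
  fixes a N :: nat
  assumes "0 < a" and "2 * a \<le> N" and "coprime a N"
  shows "geom_real (circ_complex a a (N - 2 * a)) homeomorphic geom_real (circ_complex 1 1 (N - 2))"
proof -
  define M where "M = int N"
  have M: "0 < M" "M = int (a + a + (N - 2 * a))" "M = int (1 + 1 + (N - 2))"
    using assms by (auto simp: M_def)
  have "coprime (int a) M" using assms(3) by (simp add: M_def)
  then obtain c where c: "(c * int a) mod M = 1 mod M" by (rule mod_inverse_exists)
  have "(2 * (c * int a)) mod M = (2 * ((c * int a) mod M)) mod M"
    by (rule mod_mult_right_eq[symmetric])
  also have "\<dots> = (2 * 1) mod M" unfolding c by (rule mod_mult_right_eq)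
  finally have twice: "(2 * (c * int a)) mod M = (2 * 1) mod M" .
  have "(c * int (N - 2 * a)) mod M = (c * M - 2 * (c * int a)) mod M"
    using assms(2) by (simp add: M_def of_nat_diff algebra_simps)
  also have "\<dots> = (0 - 2 * 1) mod M"
    using twice by (intro mod_diff_cong) simp_all
  also have "\<dots> = int (N - 2) mod M"
    using assms by (simp add: M_def of_nat_diff mod_simps)
  finally have "(`) (mult_residues M c) ` circ_complex a a (N - 2 * a) = circ_complex 1 1 (N - 2)"
    by (intro circ_complex_scale[OF M c]) (use c in simp_all)
  then have "geom_real (circ_complex 1 1 (N - 2)) homeomorphic geom_real (circ_complex a a (N - 2 * a))"
    using geom_real_bij_image_homeomorphic[OF bij_mult_residues[OF M(1) c],
        of "circ_complex a a (N - 2 * a)"] by (simp only:)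
  then show ?thesis using homeomorphic_sym by blast
qed

section \<open>The zigzag triangulation of the strip\<close>

definition zigzag :: "int \<Rightarrow> real" where
  "zigzag v = (if even v then 0 else 1)"

definition row_weight :: "int \<Rightarrow> real \<Rightarrow> real" where
  "row_weight v y = (if even v then 1 - y else y)"

text \<open>Vertex \<open>v\<close> of the strip is placed at \<open>(v, zigzag v)\<close>; the triangles \<open>{a, a+1, a+2}\<close>
  then tile \<open>\<real> \<times> [0,1]\<close>, and \<open>hat v\<close> is the piecewise-linear function which is 1 at
  vertex \<open>v\<close> and 0 at all other vertices.\<close>

definition hat :: "int \<Rightarrow> real \<Rightarrow> real \<Rightarrow> real" where
  "hat v x y = max 0 (min (row_weight v y) ((1 + row_weight v y - \<bar>x - of_int v\<bar>) / 2))"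

text \<open>The point of triangle \<open>{a, a+1, a+2}\<close> with barycentric coordinates \<open>\<alpha>, \<beta>, \<gamma>\<close>
  (assuming \<open>\<alpha> + \<beta> + \<gamma> = 1\<close>).\<close>

definition zigzag_point :: "int \<Rightarrow> real \<Rightarrow> real \<Rightarrow> real \<Rightarrow> real \<times> real" where
  "zigzag_point a \<alpha> \<beta> \<gamma> = (of_int a + \<beta> + 2 * \<gamma>, if even a then \<beta> else \<alpha> + \<gamma>)"

lemma hat_eq_0_far:
  assumes "2 \<le> \<bar>x - of_int v\<bar>" and "0 \<le> y" and "y \<le> 1"
  shows "hat v x y = 0"
  using assms unfolding hat_def row_weight_def by auto

lemma hat_zigzag_point:
  assumes nonneg: "0 \<le> \<alpha>" "0 \<le> \<beta>" "0 \<le> \<gamma>" and sum: "\<alpha> + \<beta> + \<gamma> = 1"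
  shows "hat v (fst (zigzag_point a \<alpha> \<beta> \<gamma>)) (snd (zigzag_point a \<alpha> \<beta> \<gamma>)) =
    (if v = a then \<alpha> else if v = a + 1 then \<beta> else if v = a + 2 then \<gamma> else 0)"
proof -
  define x where "x = fst (zigzag_point a \<alpha> \<beta> \<gamma>)"
  define y where "y = snd (zigzag_point a \<alpha> \<beta> \<gamma>)"
  have x: "x = of_int a + \<beta> + 2 * \<gamma>" and y: "0 \<le> y" "y \<le> 1"
    using nonneg sum by (auto simp: x_def y_def zigzag_point_def)
  have row: "row_weight v y = (if even (v - a) then \<alpha> + \<gamma> else \<beta>)"
    using sum by (auto simp: y_def zigzag_point_def row_weight_def)
  consider "v = a - 1" | "v = a" | "v = a + 1" | "v = a + 2" | "v = a + 3" | "v \<le> a - 2 \<or> a + 4 \<le> v"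
    by linarith
  then have "hat v x y = (if v = a then \<alpha> else if v = a + 1 then \<beta> else if v = a + 2 then \<gamma> else 0)"
  proof cases
    case 6
    then have "2 \<le> \<bar>x - of_int v\<bar>" "v \<noteq> a" "v \<noteq> a + 1" "v \<noteq> a + 2"
      using x nonneg sum by (auto simp: abs_if)
    then show ?thesis using hat_eq_0_far y by simp
  qed (use row x nonneg sum in \<open>auto simp: hat_def abs_if\<close>)
  then show ?thesis unfolding x_def y_def .
qed

lemma zigzag_point_cover:
  assumes "0 \<le> x" "x \<le> of_int N" "0 \<le> y" "y \<le> 1"
  obtains a \<alpha> \<beta> \<gamma> where "-1 \<le> a" "a \<le> N" "0 \<le> \<alpha>" "0 \<le> \<beta>" "0 \<le> \<gamma>" "\<alpha> + \<beta> + \<gamma> = 1"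
    "(x, y) = zigzag_point a \<alpha> \<beta> \<gamma>"
proof -
  define m where "m = \<lfloor>x\<rfloor>"
  define t where "t = x - of_int m"
  define \<eta> where "\<eta> = row_weight m y"
  have t: "0 \<le> t" "t < 1" unfolding t_def m_def by linarith+
  have m: "0 \<le> m" "m \<le> N" unfolding m_def using assms by (auto simp: floor_le_iff le_floor_iff)
  have \<eta>: "0 \<le> \<eta>" "\<eta> \<le> 1" unfolding \<eta>_def row_weight_def using assms by auto
  show ?thesis
  proof (cases "1 \<le> t + \<eta>")
    case True
    define \<gamma> where "\<gamma> = (t - 1 + \<eta>) / 2"
    show ?thesis
    proof (rule that[of m "\<eta> - \<gamma>" "1 - \<eta>" \<gamma>])
      show "(x, y) = zigzag_point m (\<eta> - \<gamma>) (1 - \<eta>) \<gamma>"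
        unfolding zigzag_point_def \<gamma>_def using t_def \<eta>_def by (auto simp: row_weight_def field_simps)
    qed (use True t \<eta> m in \<open>auto simp: \<gamma>_def\<close>)
  next
    case False
    define \<gamma> where "\<gamma> = (t + 1 - \<eta>) / 2"
    show ?thesis
    proof (rule that[of "m - 1" "1 - \<eta> - \<gamma>" \<eta> \<gamma>])
      show "(x, y) = zigzag_point (m - 1) (1 - \<eta> - \<gamma>) \<eta> \<gamma>"
        unfolding zigzag_point_def \<gamma>_def using t_def \<eta>_def by (auto simp: row_weight_def field_simps)
    qed (use False t \<eta> m in \<open>auto simp: \<gamma>_def\<close>)
  qed
qed

section \<open>The realization of \<open>C(1, 1, N - 2)\<close>\<close>

definition tri_point :: "int \<Rightarrow> int \<Rightarrow> real \<Rightarrow> real \<Rightarrow> real \<Rightarrow> int \<Rightarrow> real" where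
  "tri_point N a \<alpha> \<beta> \<gamma> u = (if a mod N = u then \<alpha> else 0) + (if (a + 1) mod N = u then \<beta> else 0)
      + (if (a + 2) mod N = u then \<gamma> else 0)"

text \<open>The strip is wrapped around by adding up the hats of all vertices in a residue class;
  on \<open>[0, N] \<times> [0, 1]\<close> only the hats with \<open>-N \<le> v \<le> 2 N\<close> can be nonzero.\<close>

definition strip_map :: "int \<Rightarrow> real \<times> real \<Rightarrow> int \<Rightarrow> real" where
  "strip_map N p u = (\<Sum>v\<in>{-N..2*N}. if v mod N = u then hat v (fst p) (snd p) else 0)"

lemma strip_map_zigzag_point:
  assumes "0 \<le> \<alpha>" "0 \<le> \<beta>" "0 \<le> \<gamma>" "\<alpha> + \<beta> + \<gamma> = 1" and "-N \<le> a" "a + 2 \<le> 2 * N"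
  shows "strip_map N (zigzag_point a \<alpha> \<beta> \<gamma>) = tri_point N a \<alpha> \<beta> \<gamma>"
proof
  fix u
  define F where "F v = (if v mod N = u then
    (if v = a then \<alpha> else if v = a + 1 then \<beta> else if v = a + 2 then \<gamma> else 0) else 0)" for v
  have "strip_map N (zigzag_point a \<alpha> \<beta> \<gamma>) u = (\<Sum>v\<in>{-N..2*N}. F v)"
    unfolding strip_map_def F_def by (simp only: hat_zigzag_point[OF assms(1-4)])
  also have "\<dots> = (\<Sum>v\<in>{a, a+1, a+2}. F v)"
    by (rule sum.mono_neutral_right) (use assms(5,6) in \<open>auto simp: F_def\<close>)
  also have "\<dots> = tri_point N a \<alpha> \<beta> \<gamma> u"
    by (simp add: F_def tri_point_def)
  finally show "strip_map N (zigzag_point a \<alpha> \<beta> \<gamma>) u = tri_point N a \<alpha> \<beta> \<gamma> u" .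
qed

lemma triangle_residues_distinct:
  fixes N a :: int
  assumes "3 \<le> N"
  shows "a mod N \<noteq> (a + 1) mod N" "a mod N \<noteq> (a + 2) mod N" "(a + 1) mod N \<noteq> (a + 2) mod N"
proof -
  have "x mod N \<noteq> y mod N" if "y - x = 1 \<or> y - x = 2" for x y :: int
  proof
    assume "x mod N = y mod N"
    then have "N dvd y - x" by (simp add: mod_eq_dvd_iff dvd_diff_commute)
    then have "N \<le> \<bar>y - x\<bar>" using that dvd_imp_le_int[of "y - x" N] assms by auto
    then show False using that assms by linarith
  qed
  then show "a mod N \<noteq> (a + 1) mod N" "a mod N \<noteq> (a + 2) mod N" "(a + 1) mod N \<noteq> (a + 2) mod N"
    by auto
qed

definition tri_points :: "int \<Rightarrow> (int \<Rightarrow> real) set" where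
  "tri_points N = {tri_point N a \<alpha> \<beta> \<gamma> | a \<alpha> \<beta> \<gamma>. 0 \<le> \<alpha> \<and> 0 \<le> \<beta> \<and> 0 \<le> \<gamma> \<and> \<alpha> + \<beta> + \<gamma> = 1}"

lemma tri_point_mod: "tri_point N (a mod N) \<alpha> \<beta> \<gamma> = tri_point N a \<alpha> \<beta> \<gamma>"
  unfolding tri_point_def by (simp add: mod_add_left_eq)

lemma sum_tri_point_mult:
  assumes "0 < N"
  shows "(\<Sum>u\<in>{0..<N}. tri_point N a \<alpha> \<beta> \<gamma> u * w u) =
    \<alpha> * w (a mod N) + \<beta> * w ((a + 1) mod N) + \<gamma> * w ((a + 2) mod N)"
proof -
  have delta: "(\<Sum>u\<in>{0..<N}. (if c mod N = u then r else 0) * w u) = r * w (c mod N)" for c and r :: real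
  proof -
    have "(\<Sum>u\<in>{0..<N}. (if c mod N = u then r else 0) * w u) = (\<Sum>u\<in>{0..<N}. if c mod N = u then r * w u else 0)"
      by (rule sum.cong) auto
    also have "\<dots> = r * w (c mod N)" using assms by (simp add: sum.delta)
    finally show ?thesis .
  qed
  show ?thesis
    unfolding tri_point_def by (simp only: sum.distrib distrib_right delta)
qed

definition lift_residue :: "int \<Rightarrow> int \<Rightarrow> int \<Rightarrow> int" where
  "lift_residue N b u = b + (u - b) mod N"

lemma lift_residue_mod_eq:
  assumes "0 < N" "b \<le> v" "v < b + N"
  shows "lift_residue N b (v mod N) = v"
proof -
  have "(v mod N - b) mod N = (v - b) mod N" by (simp add: mod_diff_left_eq)
  also have "\<dots> = v - b" using assms by (simp add: mod_pos_pos_trivial)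
  finally show ?thesis unfolding lift_residue_def by simp
qed

lemma mod_lift_residue: "lift_residue N b u mod N = u mod N"
  unfolding lift_residue_def by (metis add.commute diff_add_cancel mod_add_left_eq)

lemma tri_point_moments:
  assumes "0 < N" "\<alpha> + \<beta> + \<gamma> = 1" "b \<le> a" "a + 2 < b + N"
  shows "(\<Sum>u\<in>{0..<N}. tri_point N a \<alpha> \<beta> \<gamma> u) = 1"
    "(\<Sum>u\<in>{0..<N}. tri_point N a \<alpha> \<beta> \<gamma> u * of_int (lift_residue N b u)) = fst (zigzag_point a \<alpha> \<beta> \<gamma>)"
    "(\<Sum>u\<in>{0..<N}. tri_point N a \<alpha> \<beta> \<gamma> u * zigzag (lift_residue N b u)) = snd (zigzag_point a \<alpha> \<beta> \<gamma>)"
proof -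
  have lift: "lift_residue N b (a mod N) = a" "lift_residue N b ((a + 1) mod N) = a + 1"
    "lift_residue N b ((a + 2) mod N) = a + 2"
    using lift_residue_mod_eq[of N b] assms by auto
  show "(\<Sum>u\<in>{0..<N}. tri_point N a \<alpha> \<beta> \<gamma> u) = 1"
    using sum_tri_point_mult[of N a \<alpha> \<beta> \<gamma> "\<lambda>_. 1"] assms by simp
  have "(\<Sum>u\<in>{0..<N}. tri_point N a \<alpha> \<beta> \<gamma> u * of_int (lift_residue N b u))
      = \<alpha> * of_int a + \<beta> * of_int (a + 1) + \<gamma> * of_int (a + 2)"
    using sum_tri_point_mult[of N a \<alpha> \<beta> \<gamma> "\<lambda>u. of_int (lift_residue N b u)"] assms lift by simp
  also have "\<dots> = (\<alpha> + \<beta> + \<gamma>) * of_int a + \<beta> + 2 * \<gamma>" by (simp add: algebra_simps)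
  finally show "(\<Sum>u\<in>{0..<N}. tri_point N a \<alpha> \<beta> \<gamma> u * of_int (lift_residue N b u)) = fst (zigzag_point a \<alpha> \<beta> \<gamma>)"
    using assms(2) by (simp add: zigzag_point_def)
  have "(\<Sum>u\<in>{0..<N}. tri_point N a \<alpha> \<beta> \<gamma> u * zigzag (lift_residue N b u))
      = \<alpha> * zigzag a + \<beta> * zigzag (a + 1) + \<gamma> * zigzag (a + 2)"
    using sum_tri_point_mult[of N a \<alpha> \<beta> \<gamma> "\<lambda>u. zigzag (lift_residue N b u)"] assms lift by simp
  then show "(\<Sum>u\<in>{0..<N}. tri_point N a \<alpha> \<beta> \<gamma> u * zigzag (lift_residue N b u)) = snd (zigzag_point a \<alpha> \<beta> \<gamma>)"
    by (simp add: zigzag_def zigzag_point_def)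
qed

lemma lift_residue_tri_point_support:
  assumes "3 < N" and "tri_point N a \<alpha> \<beta> \<gamma> u \<noteq> 0"
  shows "a \<le> lift_residue N (a - 1) u" "lift_residue N (a - 1) u \<le> a + 2"
proof -
  obtain j where j: "j \<in> {0, 1, 2}" "u = (a + j) mod N"
    using assms(2) unfolding tri_point_def by (metis add_0_right empty_iff insert_iff)
  have "lift_residue N (a - 1) u = a + j"
    unfolding j(2) by (rule lift_residue_mod_eq) (use assms(1) j in auto)
  then show "a \<le> lift_residue N (a - 1) u" "lift_residue N (a - 1) u \<le> a + 2" using j by auto
qed

lemma zigzag_diff: "zigzag (v - d) = (if even d then zigzag v else 1 - zigzag v)"
  unfolding zigzag_def by auto

text \<open>The lifts of the support of a common point of two triangles to the windows starting at
  \<open>a - 1\<close> and \<open>a' - 1\<close> lie within distance 2 of \<open>a\<close>, resp. \<open>a'\<close>; as they are congruent mod \<open>N \<ge> 5\<close>,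
  they differ by one and the same multiple of \<open>N\<close>.\<close>

lemma tri_point_eq_imp_lift_shift:
  assumes N: "5 \<le> N" and eq: "tri_point N a \<alpha> \<beta> \<gamma> = tri_point N a' \<alpha>' \<beta>' \<gamma>'"
  obtains d where "N dvd d"
    "\<And>u. tri_point N a \<alpha> \<beta> \<gamma> u \<noteq> 0 \<Longrightarrow> lift_residue N (a' - 1) u = lift_residue N (a - 1) u - d"
proof (cases "\<exists>u. tri_point N a \<alpha> \<beta> \<gamma> u \<noteq> 0")
  case False
  then show ?thesis by (intro that[of 0]) auto
next
  case True
  then obtain u0 where u0: "tri_point N a \<alpha> \<beta> \<gamma> u0 \<noteq> 0" by blast
  define \<delta> where "\<delta> u = lift_residue N (a - 1) u - lift_residue N (a' - 1) u" for u
  have N3: "3 < N" using N by simp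
  have near: "a - a' - 2 \<le> \<delta> u \<and> \<delta> u \<le> a - a' + 2" if "tri_point N a \<alpha> \<beta> \<gamma> u \<noteq> 0" for u
  proof -
    from that eq have "tri_point N a' \<alpha>' \<beta>' \<gamma>' u \<noteq> 0" by simp
    with lift_residue_tri_point_support[OF N3 that] lift_residue_tri_point_support[OF N3 this]
    show ?thesis unfolding \<delta>_def by linarith
  qed
  have dvd: "N dvd \<delta> u" for u
    unfolding \<delta>_def by (simp add: mod_eq_dvd_iff[symmetric] mod_lift_residue)
  show ?thesis
  proof (rule that[of "\<delta> u0"])
    show "N dvd \<delta> u0" by (rule dvd)
    fix u assume u: "tri_point N a \<alpha> \<beta> \<gamma> u \<noteq> 0"
    have "N dvd \<delta> u - \<delta> u0" using dvd by (simp add: dvd_diff)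
    moreover have "\<bar>\<delta> u - \<delta> u0\<bar> < N" using near[OF u] near[OF u0] N by linarith
    ultimately have "\<delta> u = \<delta> u0" using dvd_imp_le_int[of "\<delta> u - \<delta> u0" N] by fastforce
    then show "lift_residue N (a' - 1) u = lift_residue N (a - 1) u - \<delta> u0" unfolding \<delta>_def by simp
  qed
qed

lemma tri_point_eq_imp_translate:
  assumes N: "5 \<le> N" and sums: "\<alpha> + \<beta> + \<gamma> = 1" "\<alpha>' + \<beta>' + \<gamma>' = 1"
    and eq: "tri_point N a \<alpha> \<beta> \<gamma> = tri_point N a' \<alpha>' \<beta>' \<gamma>'"
  obtains d where "N dvd d"
    "fst (zigzag_point a' \<alpha>' \<beta>' \<gamma>') = fst (zigzag_point a \<alpha> \<beta> \<gamma>) - of_int d"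
    "snd (zigzag_point a' \<alpha>' \<beta>' \<gamma>') =
      (if even d then snd (zigzag_point a \<alpha> \<beta> \<gamma>) else 1 - snd (zigzag_point a \<alpha> \<beta> \<gamma>))"
proof -
  define F where "F = tri_point N a \<alpha> \<beta> \<gamma>"
  have F': "F = tri_point N a' \<alpha>' \<beta>' \<gamma>'" using eq by (simp add: F_def)
  obtain d where d: "N dvd d" and lift': "\<And>u. F u \<noteq> 0 \<Longrightarrow>
      lift_residue N (a' - 1) u = lift_residue N (a - 1) u - d"
    using tri_point_eq_imp_lift_shift[OF N eq] unfolding F_def by blast
  have sum_F: "(\<Sum>u\<in>{0..<N}. F u) = 1"
    unfolding F_def by (rule tri_point_moments(1)) (use N sums in auto)
  have moments: "fst (zigzag_point b \<alpha>'' \<beta>'' \<gamma>'') = (\<Sum>u\<in>{0..<N}. F u * of_int (lift_residue N (b - 1) u))"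
    "snd (zigzag_point b \<alpha>'' \<beta>'' \<gamma>'') = (\<Sum>u\<in>{0..<N}. F u * zigzag (lift_residue N (b - 1) u))"
    if "F = tri_point N b \<alpha>'' \<beta>'' \<gamma>''" "\<alpha>'' + \<beta>'' + \<gamma>'' = 1" for b \<alpha>'' \<beta>'' \<gamma>''
    unfolding that(1) by (rule tri_point_moments(2,3)[symmetric]; use N that(2) in simp)+
  have "F u * of_int (lift_residue N (a' - 1) u) = F u * of_int (lift_residue N (a - 1) u) - F u * of_int d"
    for u by (cases "F u = 0") (simp_all add: lift' algebra_simps)
  then have "fst (zigzag_point a' \<alpha>' \<beta>' \<gamma>') = (\<Sum>u\<in>{0..<N}. F u * of_int (lift_residue N (a - 1) u) - F u * of_int d)"
    unfolding moments(1)[OF F' sums(2)] by simp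
  also have "\<dots> = fst (zigzag_point a \<alpha> \<beta> \<gamma>) - of_int d"
    unfolding moments(1)[OF F_def sums(1)] by (simp add: sum_subtractf sum_distrib_right[symmetric] sum_F)
  finally have x: "fst (zigzag_point a' \<alpha>' \<beta>' \<gamma>') = fst (zigzag_point a \<alpha> \<beta> \<gamma>) - of_int d" .
  have "F u * zigzag (lift_residue N (a' - 1) u) = (if even d then F u * zigzag (lift_residue N (a - 1) u)
      else F u - F u * zigzag (lift_residue N (a - 1) u))" for u
    by (cases "F u = 0") (simp_all add: lift' zigzag_diff algebra_simps)
  then have "snd (zigzag_point a' \<alpha>' \<beta>' \<gamma>') = (\<Sum>u\<in>{0..<N}.
      if even d then F u * zigzag (lift_residue N (a - 1) u) else F u - F u * zigzag (lift_residue N (a - 1) u))"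
    unfolding moments(2)[OF F' sums(2)] by simp
  also have "\<dots> = (if even d then snd (zigzag_point a \<alpha> \<beta> \<gamma>) else 1 - snd (zigzag_point a \<alpha> \<beta> \<gamma>))"
    unfolding moments(2)[OF F_def sums(1)] by (simp add: sum_subtractf sum_F)
  finally show ?thesis using that[OF d x] by blast
qed

definition flip :: "int \<Rightarrow> real \<Rightarrow> real" where
  "flip N y = (if even N then y else 1 - y)"

definition band_rel :: "int \<Rightarrow> real \<times> real \<Rightarrow> real \<times> real \<Rightarrow> bool" where
  "band_rel N p q \<longleftrightarrow> p = q
     \<or> (fst p = 0 \<and> fst q = of_int N \<and> snd q = flip N (snd p))
     \<or> (fst q = 0 \<and> fst p = of_int N \<and> snd p = flip N (snd q))"

lemma tri_point_eq_imp_band_rel: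
  assumes N: "5 \<le> N" and sums: "\<alpha> + \<beta> + \<gamma> = 1" "\<alpha>' + \<beta>' + \<gamma>' = 1"
    and eq: "tri_point N a \<alpha> \<beta> \<gamma> = tri_point N a' \<alpha>' \<beta>' \<gamma>'"
    and p: "p = zigzag_point a \<alpha> \<beta> \<gamma>" "0 \<le> fst p" "fst p \<le> of_int N"
    and q: "q = zigzag_point a' \<alpha>' \<beta>' \<gamma>'" "0 \<le> fst q" "fst q \<le> of_int N"
  shows "band_rel N p q"
proof -
  obtain d where d: "N dvd d" "fst q = fst p - of_int d" "snd q = (if even d then snd p else 1 - snd p)"
    using tri_point_eq_imp_translate[OF N sums eq] p(1) q(1) by metis
  obtain c where c: "d = N * c" using d(1) by (auto simp: dvd_def)
  have "\<bar>of_int d\<bar> \<le> (of_int N :: real)" using d(2) p q by linarith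
  then have "\<bar>N * c\<bar> \<le> N" unfolding c by linarith
  then have "\<bar>c\<bar> \<le> 1" using N by (simp add: abs_mult)
  then have "c = 0 \<or> c = 1 \<or> c = -1" by linarith
  then show ?thesis
  proof (elim disjE)
    assume "c = 0"
    then show ?thesis using d c by (simp add: band_rel_def prod_eq_iff)
  next
    assume "c = 1"
    then show ?thesis using d c p q by (auto simp: band_rel_def flip_def)
  next
    assume "c = -1"
    then show ?thesis using d c p q by (auto simp: band_rel_def flip_def)
  qed
qed

lemma strip_triangle_mem:
  assumes "2 \<le> N"
  shows "{a mod int N, (a + 1) mod int N, (a + 2) mod int N} \<in> circ_complex 1 1 (N - 2)"
proof -
  have N: "int N = int (1 + 1 + (N - 2))" using assms by simp
  have "{a mod int N, (a + int 1) mod int N, (a + int 1 + int 1) mod int N} \<in> circ_complex 1 1 (N - 2)"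
    unfolding mem_circ_complex_iff[OF N] by blast
  then show ?thesis by (simp add: add.assoc)
qed

lemma strip_simplex_subset_triangle:
  assumes "2 \<le> N" and "\<sigma> \<in> circ_complex 1 1 (N - 2)"
  obtains a where "\<sigma> \<subseteq> {a mod int N, (a + 1) mod int N, (a + 2) mod int N}"
proof -
  have N: "int N = int (1 + 1 + (N - 2))" using assms(1) by simp
  have wrap: "(k + int (N - 2)) mod int N = (k - 2) mod int N" for k
  proof -
    have "k + int (N - 2) = k - 2 + int N" using assms(1) by simp
    then show ?thesis by (simp only: mod_add_self2)
  qed
  from assms(2) N show ?thesis
  proof (cases rule: circ_complex_cases)
    case (vertex k) then show ?thesis by (intro that[of k]) simp
  next
    case (edge k ni)
    show ?thesis
    proof (cases "ni = 1")
      case True then show ?thesis using edge by (intro that[of k]) auto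
    next
      case False
      then have "\<sigma> = {(k - 2 + 2) mod int N, (k - 2) mod int N}" using edge wrap by auto
      then show ?thesis by (intro that[of "k - 2"]) auto
    qed
  next
    case (up k) then show ?thesis by (intro that[of k]) (auto simp: add.assoc)
  next
    case (down k)
    then have "\<sigma> = {(k - 2 + 2) mod int N, (k - 2 + 1) mod int N, (k - 2) mod int N}"
      by (simp add: algebra_simps)
    then show ?thesis by (intro that[of "k - 2"]) auto
  qed
qed

lemma tri_point_eq_on_support:
  assumes "3 \<le> N" and "\<And>u. u \<notin> {a mod N, (a + 1) mod N, (a + 2) mod N} \<Longrightarrow> f u = 0"
  shows "f = tri_point N a (f (a mod N)) (f ((a + 1) mod N)) (f ((a + 2) mod N))"
proof
  fix u
  note distinct = triangle_residues_distinct[OF assms(1), of a]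
  show "f u = tri_point N a (f (a mod N)) (f ((a + 1) mod N)) (f ((a + 2) mod N)) u"
    using assms(2)[of u] distinct unfolding tri_point_def by (cases "u = a mod N") auto
qed

lemma tri_point_in_geom_real:
  assumes "3 \<le> N" and coords: "0 \<le> \<alpha>" "0 \<le> \<beta>" "0 \<le> \<gamma>" "\<alpha> + \<beta> + \<gamma> = 1"
  shows "tri_point (int N) a \<alpha> \<beta> \<gamma> \<in> geom_real (circ_complex 1 1 (N - 2))"
  unfolding geom_real_def
proof (intro CollectI bexI conjI allI impI)
  show "{a mod int N, (a + 1) mod int N, (a + 2) mod int N} \<in> circ_complex 1 1 (N - 2)"
    using strip_triangle_mem assms(1) by simp
  have "3 \<le> int N" using assms(1) by simp
  then show "sum (tri_point (int N) a \<alpha> \<beta> \<gamma>) {a mod int N, (a + 1) mod int N, (a + 2) mod int N} = 1"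
    using triangle_residues_distinct[of "int N" a] coords(4) by (simp add: tri_point_def)
  fix v
  show "v \<notin> {a mod int N, (a + 1) mod int N, (a + 2) mod int N} \<Longrightarrow> tri_point (int N) a \<alpha> \<beta> \<gamma> v = 0"
    by (simp add: tri_point_def)
  show "0 \<le> tri_point (int N) a \<alpha> \<beta> \<gamma> v" using coords by (simp add: tri_point_def)
qed

lemma geom_real_strip_complex:
  assumes "3 \<le> N"
  shows "geom_real (circ_complex 1 1 (N - 2)) = tri_points (int N)"
proof (intro equalityI subsetI)
  fix f assume "f \<in> geom_real (circ_complex 1 1 (N - 2))"
  then obtain \<sigma> where \<sigma>: "\<sigma> \<in> circ_complex 1 1 (N - 2)" "\<forall>v. v \<notin> \<sigma> \<longrightarrow> f v = 0" "\<forall>v. 0 \<le> f v"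
    "sum f \<sigma> = 1"
    unfolding geom_real_def by blast
  obtain a where a: "\<sigma> \<subseteq> {a mod int N, (a + 1) mod int N, (a + 2) mod int N}"
    using strip_simplex_subset_triangle[OF _ \<sigma>(1)] assms by auto
  define T where "T = {a mod int N, (a + 1) mod int N, (a + 2) mod int N}"
  have "3 \<le> int N" using assms by simp
  note distinct = triangle_residues_distinct[OF this, of a]
  have f: "f = tri_point (int N) a (f (a mod int N)) (f ((a + 1) mod int N)) (f ((a + 2) mod int N))"
    by (rule tri_point_eq_on_support) (use assms a \<sigma>(2) in auto)
  have "sum f \<sigma> = sum f T"
    by (rule sum.mono_neutral_left) (use a \<sigma>(2) in \<open>auto simp: T_def\<close>)
  also have "\<dots> = f (a mod int N) + f ((a + 1) mod int N) + f ((a + 2) mod int N)"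
    using distinct by (simp add: T_def)
  finally have sum: "f (a mod int N) + f ((a + 1) mod int N) + f ((a + 2) mod int N) = 1"
    using \<sigma>(4) by simp
  show "f \<in> tri_points (int N)"
    unfolding tri_points_def
  proof (intro CollectI exI conjI)
    show "f = tri_point (int N) a (f (a mod int N)) (f ((a + 1) mod int N)) (f ((a + 2) mod int N))"
      by (rule f)
  qed (use \<sigma>(3) sum in auto)
next
  fix f assume "f \<in> tri_points (int N)"
  then show "f \<in> geom_real (circ_complex 1 1 (N - 2))"
    using tri_point_in_geom_real[OF assms] unfolding tri_points_def by auto
qed

definition strip_rect :: "nat \<Rightarrow> (real \<times> real) set" where
  "strip_rect N = {0..real N} \<times> {0..1}"

lemma strip_map_on_rect:
  assumes "2 \<le> N" and "p \<in> strip_rect N"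
  obtains a \<alpha> \<beta> \<gamma> where "0 \<le> \<alpha>" "0 \<le> \<beta>" "0 \<le> \<gamma>" "\<alpha> + \<beta> + \<gamma> = 1"
    "p = zigzag_point a \<alpha> \<beta> \<gamma>" "strip_map (int N) p = tri_point (int N) a \<alpha> \<beta> \<gamma>"
proof -
  obtain x y where xy: "p = (x, y)" and bounds: "0 \<le> x" "x \<le> of_int (int N)" "0 \<le> y" "y \<le> 1"
    using assms(2) by (auto simp: strip_rect_def)
  obtain a \<alpha> \<beta> \<gamma> where a: "-1 \<le> a" "a \<le> int N"
    and coords: "0 \<le> \<alpha>" "0 \<le> \<beta>" "0 \<le> \<gamma>" "\<alpha> + \<beta> + \<gamma> = 1"
    and p: "(x, y) = zigzag_point a \<alpha> \<beta> \<gamma>"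
    by (rule zigzag_point_cover[OF bounds])
  show ?thesis
  proof (rule that[OF coords])
    show "p = zigzag_point a \<alpha> \<beta> \<gamma>" using xy p by simp
    then show "strip_map (int N) p = tri_point (int N) a \<alpha> \<beta> \<gamma>"
      using strip_map_zigzag_point[OF coords, of "int N" a] a assms(1) by simp
  qed
qed

lemma tri_point_diff_modulus: "tri_point N (a - N) \<alpha> \<beta> \<gamma> = tri_point N a \<alpha> \<beta> \<gamma>"
proof -
  have "tri_point N (a - N) \<alpha> \<beta> \<gamma> = tri_point N ((a - N) mod N) \<alpha> \<beta> \<gamma>"
    by (rule tri_point_mod[symmetric])
  also have "\<dots> = tri_point N (a mod N) \<alpha> \<beta> \<gamma>" by simp
  finally show ?thesis by (simp only: tri_point_mod)
qed

lemma strip_map_image: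
  assumes "3 \<le> N"
  shows "strip_map (int N) ` strip_rect N = geom_real (circ_complex 1 1 (N - 2))"
  unfolding geom_real_strip_complex[OF assms]
proof (intro equalityI subsetI)
  fix f assume "f \<in> strip_map (int N) ` strip_rect N"
  then obtain p where p: "p \<in> strip_rect N" and f: "f = strip_map (int N) p" by blast
  from assms have "2 \<le> N" by simp
  then obtain a \<alpha> \<beta> \<gamma> where "0 \<le> \<alpha>" "0 \<le> \<beta>" "0 \<le> \<gamma>" "\<alpha> + \<beta> + \<gamma> = 1"
    "p = zigzag_point a \<alpha> \<beta> \<gamma>" "strip_map (int N) p = tri_point (int N) a \<alpha> \<beta> \<gamma>"
    using p by (rule strip_map_on_rect)
  then show "f \<in> tri_points (int N)"
    unfolding f tri_points_def by auto
next
  fix f assume "f \<in> tri_points (int N)"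
  then obtain a' \<alpha> \<beta> \<gamma> where f: "f = tri_point (int N) a' \<alpha> \<beta> \<gamma>"
    and coords: "0 \<le> \<alpha>" "0 \<le> \<beta>" "0 \<le> \<gamma>" "\<alpha> + \<beta> + \<gamma> = 1"
    unfolding tri_points_def by auto
  define a where "a = a' mod int N"
  have a: "0 \<le> a" "a < int N" "f = tri_point (int N) a \<alpha> \<beta> \<gamma>"
    using assms by (simp_all add: a_def f tri_point_mod)
  show "f \<in> strip_map (int N) ` strip_rect N"
  proof (cases "of_int a + \<beta> + 2 * \<gamma> \<le> real N")
    case True
    then have "zigzag_point a \<alpha> \<beta> \<gamma> \<in> strip_rect N"
      using a coords by (auto simp: strip_rect_def zigzag_point_def)
    moreover have "strip_map (int N) (zigzag_point a \<alpha> \<beta> \<gamma>) = f"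
      unfolding a(3) by (rule strip_map_zigzag_point) (use coords a(1,2) assms in auto)
    ultimately show ?thesis by (metis image_eqI)
  next
    case False
    then have "zigzag_point (a - int N) \<alpha> \<beta> \<gamma> \<in> strip_rect N"
      using a coords by (auto simp: strip_rect_def zigzag_point_def)
    moreover have "strip_map (int N) (zigzag_point (a - int N) \<alpha> \<beta> \<gamma>) = f"
      using strip_map_zigzag_point[of \<alpha> \<beta> \<gamma> "int N" "a - int N"] coords a assms
      by (simp add: tri_point_diff_modulus)
    ultimately show ?thesis by (metis image_eqI)
  qed
qed

lemma continuous_on_strip_map: "continuous_on S (strip_map N)"
proof (rule continuous_on_coordinatewise_then_product)
  have "continuous_on S (\<lambda>p. hat v (fst p) (snd p))" for v
    unfolding hat_def row_weight_def by (cases "even v") (auto intro!: continuous_intros)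
  then have hat: "continuous_on S (\<lambda>p. if P then hat v (fst p) (snd p) else 0)" for P v
    by (cases P) simp_all
  fix u
  show "continuous_on S (\<lambda>p. strip_map N p u)"
    unfolding strip_map_def
    by (intro continuous_on_sum) (simp add: hat)
qed

lemma strip_map_boundary:
  assumes "2 \<le> N" and "0 \<le> y" "y \<le> 1"
  shows "strip_map (int N) (real N, flip (int N) y) = strip_map (int N) (0, y)"
proof -
  have "(0, y) \<in> strip_rect N" using assms by (simp add: strip_rect_def)
  with assms(1) obtain a \<alpha> \<beta> \<gamma> where coords: "0 \<le> \<alpha>" "0 \<le> \<beta>" "0 \<le> \<gamma>" "\<alpha> + \<beta> + \<gamma> = 1"
    and p: "(0, y) = zigzag_point a \<alpha> \<beta> \<gamma>" and map0: "strip_map (int N) (0, y) = tri_point (int N) a \<alpha> \<beta> \<gamma>"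
    by (rule strip_map_on_rect)
  have x: "of_int a + \<beta> + 2 * \<gamma> = 0" and y: "y = (if even a then \<beta> else \<alpha> + \<gamma>)"
    using p by (simp_all add: zigzag_point_def)
  then have a: "-2 \<le> a" "a \<le> 0" using coords by linarith+
  have "(real N, flip (int N) y) = zigzag_point (a + int N) \<alpha> \<beta> \<gamma>"
    using x y coords(4) by (auto simp: zigzag_point_def flip_def)
  then have "strip_map (int N) (real N, flip (int N) y) = tri_point (int N) (a + int N) \<alpha> \<beta> \<gamma>"
    using strip_map_zigzag_point[OF coords, of "int N" "a + int N"] a assms(1) by simp
  also have "\<dots> = tri_point (int N) a \<alpha> \<beta> \<gamma>"
    using tri_point_diff_modulus[of "int N" "a + int N"] by simp
  finally show ?thesis using map0 by simp
qed

lemma strip_map_eq_iff: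
  assumes N: "5 \<le> N" and p: "p \<in> strip_rect N" and q: "q \<in> strip_rect N"
  shows "strip_map (int N) p = strip_map (int N) q \<longleftrightarrow> band_rel (int N) p q"
proof
  assume eq: "strip_map (int N) p = strip_map (int N) q"
  from N have "2 \<le> N" by simp
  from this p obtain a \<alpha> \<beta> \<gamma> where coords: "0 \<le> \<alpha>" "0 \<le> \<beta>" "0 \<le> \<gamma>" "\<alpha> + \<beta> + \<gamma> = 1"
    and p': "p = zigzag_point a \<alpha> \<beta> \<gamma>" and map_p: "strip_map (int N) p = tri_point (int N) a \<alpha> \<beta> \<gamma>"
    by (rule strip_map_on_rect)
  from \<open>2 \<le> N\<close> q obtain a' \<alpha>' \<beta>' \<gamma>' where coords': "0 \<le> \<alpha>'" "0 \<le> \<beta>'" "0 \<le> \<gamma>'" "\<alpha>' + \<beta>' + \<gamma>' = 1"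
    and q': "q = zigzag_point a' \<alpha>' \<beta>' \<gamma>'" and map_q: "strip_map (int N) q = tri_point (int N) a' \<alpha>' \<beta>' \<gamma>'"
    by (rule strip_map_on_rect)
  show "band_rel (int N) p q"
  proof (rule tri_point_eq_imp_band_rel[OF _ coords(4) coords'(4) _ p' _ _ q'])
    show "5 \<le> int N" using N by simp
    show "tri_point (int N) a \<alpha> \<beta> \<gamma> = tri_point (int N) a' \<alpha>' \<beta>' \<gamma>'" using eq map_p map_q by simp
  qed (use p q in \<open>auto simp: strip_rect_def\<close>)
next
  assume "band_rel (int N) p q"
  then consider "p = q"
    | "fst p = 0" "fst q = real N" "snd q = flip (int N) (snd p)"
    | "fst q = 0" "fst p = real N" "snd p = flip (int N) (snd q)"
    unfolding band_rel_def by auto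
  then show "strip_map (int N) p = strip_map (int N) q"
  proof cases
    case 2
    then have "p = (0, snd p)" "q = (real N, flip (int N) (snd p))" by (simp_all add: prod_eq_iff)
    then show ?thesis using strip_map_boundary[of N "snd p"] N p by (auto simp: strip_rect_def)
  next
    case 3
    then have "q = (0, snd q)" "p = (real N, flip (int N) (snd q))" by (simp_all add: prod_eq_iff)
    then show ?thesis using strip_map_boundary[of N "snd q"] N q by (auto simp: strip_rect_def)
  qed simp
qed

section \<open>Cylinder and Moebius band as quotients of the rectangle\<close>

lemma cos_sin_eq_imp_0_2pi:
  assumes s: "0 \<le> s" "s \<le> 2 * pi" "0 \<le> s'" "s' \<le> 2 * pi" and "cos s = cos s'" "sin s = sin s'"
  shows "s = s' \<or> (s = 0 \<and> s' = 2 * pi) \<or> (s = 2 * pi \<and> s' = 0)"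
proof -
  obtain m :: int where m: "s = s' + 2 * pi * m" using sin_cos_eq_iff assms(5,6) by blast
  have "\<bar>2 * pi * m\<bar> \<le> 2 * pi" using m s by linarith
  then have "\<bar>real_of_int m\<bar> \<le> 1" by (simp add: abs_mult)
  then have "m = 0 \<or> m = 1 \<or> m = -1" by linarith
  then show ?thesis using m s by auto
qed

definition turn :: "nat \<Rightarrow> real \<Rightarrow> real" where
  "turn N x = (2 * pi / real N) * x"

lemma turn_bounds:
  assumes "0 < N" "0 \<le> x" "x \<le> real N"
  shows "0 \<le> turn N x" "turn N x \<le> 2 * pi"
  using assms by (auto simp: turn_def field_simps)

lemma turn_eq_iff:
  assumes "0 < N"
  shows "turn N x = turn N x' \<longleftrightarrow> x = x'" "turn N x = 0 \<longleftrightarrow> x = 0" "turn N x = 2 * pi \<longleftrightarrow> x = real N"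
  using assms by (auto simp: turn_def field_simps)

lemma turn_endpoints: "turn N 0 = 0" "0 < N \<Longrightarrow> turn N (real N) = 2 * pi"
  by (simp_all add: turn_def)

lemma turn_surj:
  assumes "0 < N" "0 \<le> s" "s \<le> 2 * pi"
  obtains x where "0 \<le> x" "x \<le> real N" "turn N x = s"
proof
  show "0 \<le> s * real N / (2 * pi)" "s * real N / (2 * pi) \<le> real N" "turn N (s * real N / (2 * pi)) = s"
    using assms by (auto simp: turn_def field_simps)
qed

definition cylinder_map :: "nat \<Rightarrow> real \<times> real \<Rightarrow> complex \<times> real" where
  "cylinder_map N p = (cis (turn N (fst p)), snd p)"

definition moebius_param :: "real \<times> real \<Rightarrow> real \<times> real \<times> real" where
  "moebius_param = (\<lambda>(s, t). ((2 + t * cos (s / 2)) * cos s, (2 + t * cos (s / 2)) * sin s, t * sin (s / 2)))"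

definition moebius_map :: "nat \<Rightarrow> real \<times> real \<Rightarrow> real \<times> real \<times> real" where
  "moebius_map N p = moebius_param (turn N (fst p), 2 * snd p - 1)"

lemma continuous_on_cylinder_map: "continuous_on S (cylinder_map N)"
proof -
  have "continuous_on S (\<lambda>p :: real \<times> real. (cis (c * fst p), snd p))" for c
    by (intro continuous_intros)
  then show ?thesis unfolding cylinder_map_def[abs_def] turn_def .
qed

lemma continuous_on_moebius_map: "continuous_on S (moebius_map N)"
proof -
  have "continuous_on S (\<lambda>p :: real \<times> real. (c * fst p, 2 * snd p - 1))" for c
    by (intro continuous_intros)
  moreover have "continuous_on T moebius_param" for T
    unfolding moebius_param_def case_prod_beta by (intro continuous_intros) auto
  ultimately have "continuous_on S (moebius_param \<circ> (\<lambda>p :: real \<times> real. (c * fst p, 2 * snd p - 1)))" for c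
    by (rule continuous_on_compose)
  then show ?thesis unfolding moebius_map_def[abs_def] turn_def o_def .
qed

lemma cylinder_map_image:
  assumes "0 < N"
  shows "cylinder_map N ` strip_rect N = cylinder"
proof (intro equalityI subsetI)
  fix z assume "z \<in> cylinder_map N ` strip_rect N"
  then obtain x y where "z = cylinder_map N (x, y)" "0 \<le> y" "y \<le> 1"
    by (auto simp: strip_rect_def)
  then show "z \<in> cylinder" by (simp add: cylinder_def cylinder_map_def)
next
  fix z assume "z \<in> cylinder"
  then obtain w y where z: "z = (w, y)" "norm w = 1" "0 \<le> y" "y \<le> 1"
    unfolding cylinder_def by auto
  have "(Re w)\<^sup>2 + (Im w)\<^sup>2 = 1" using z(2) cmod_power2[of w] by simp
  then obtain s where s: "0 \<le> s" "s < 2 * pi" "Re w = cos s" "Im w = sin s"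
    using sincos_total_2pi by blast
  obtain x where x: "0 \<le> x" "x \<le> real N" "turn N x = s"
    using turn_surj[OF assms, of s] s by auto
  have "cylinder_map N (x, y) = z" using x s z(1) by (simp add: cylinder_map_def complex_eq_iff)
  moreover have "(x, y) \<in> strip_rect N" using x z by (simp add: strip_rect_def)
  ultimately show "z \<in> cylinder_map N ` strip_rect N" by (metis image_eqI)
qed

lemma moebius_map_image:
  assumes "0 < N"
  shows "moebius_map N ` strip_rect N = moebius_band"
proof -
  have rect: "(\<lambda>p. (turn N (fst p), 2 * snd p - 1)) ` strip_rect N = {0..2 * pi} \<times> {-1..1}"
  proof (intro equalityI subsetI)
    fix q assume "q \<in> (\<lambda>p. (turn N (fst p), 2 * snd p - 1)) ` strip_rect N"
    then obtain x y where "q = (turn N x, 2 * y - 1)" "0 \<le> x" "x \<le> real N" "0 \<le> y" "y \<le> 1"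
      by (auto simp: strip_rect_def)
    then show "q \<in> {0..2 * pi} \<times> {-1..1}" using turn_bounds[OF assms] by simp
  next
    fix q :: "real \<times> real" assume "q \<in> {0..2 * pi} \<times> {-1..1}"
    then obtain s t where q: "q = (s, t)" "0 \<le> s" "s \<le> 2 * pi" "-1 \<le> t" "t \<le> 1" by auto
    obtain x where x: "0 \<le> x" "x \<le> real N" "turn N x = s" using turn_surj[OF assms q(2,3)] .
    have "q = (\<lambda>p. (turn N (fst p), 2 * snd p - 1)) (x, (t + 1) / 2)" using q x by (simp add: field_simps)
    moreover have "(x, (t + 1) / 2) \<in> strip_rect N" using x q by (simp add: strip_rect_def)
    ultimately show "q \<in> (\<lambda>p. (turn N (fst p), 2 * snd p - 1)) ` strip_rect N" by (rule image_eqI)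
  qed
  have "moebius_map N ` strip_rect N = moebius_param ` (\<lambda>p. (turn N (fst p), 2 * snd p - 1)) ` strip_rect N"
    unfolding image_image moebius_map_def ..
  also have "\<dots> = moebius_band"
    unfolding rect moebius_band_def moebius_param_def ..
  finally show ?thesis .
qed

lemma cylinder_map_eq_iff:
  assumes N: "0 < N" "even N" and p: "p \<in> strip_rect N" and q: "q \<in> strip_rect N"
  shows "cylinder_map N p = cylinder_map N q \<longleftrightarrow> band_rel (int N) p q"
proof -
  obtain x y x' y' where xy: "p = (x, y)" "q = (x', y')" by fastforce
  have x: "0 \<le> x" "x \<le> real N" "0 \<le> x'" "x' \<le> real N" using p q xy by (auto simp: strip_rect_def)
  note angles = turn_bounds[OF N(1) x(1,2)] turn_bounds[OF N(1) x(3,4)]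
  have "cylinder_map N p = cylinder_map N q \<longleftrightarrow>
      (cos (turn N x) = cos (turn N x') \<and> sin (turn N x) = sin (turn N x')) \<and> y = y'"
    by (simp add: xy cylinder_map_def complex_eq_iff)
  also have "\<dots> \<longleftrightarrow> (x = x' \<or> (x = 0 \<and> x' = real N) \<or> (x = real N \<and> x' = 0)) \<and> y = y'"
    using cos_sin_eq_imp_0_2pi[OF angles] turn_eq_iff[OF N(1)] turn_endpoints N(1) by auto
  also have "\<dots> \<longleftrightarrow> band_rel (int N) p q"
    using N(2) by (auto simp: xy band_rel_def flip_def)
  finally show ?thesis .
qed

lemma moebius_param_eq_iff:
  assumes s: "0 \<le> s" "s \<le> 2 * pi" "0 \<le> s'" "s' \<le> 2 * pi" and t: "\<bar>t\<bar> \<le> 1" "\<bar>t'\<bar> \<le> 1"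
  shows "moebius_param (s, t) = moebius_param (s', t') \<longleftrightarrow>
    (s = s' \<and> t = t') \<or> (s = 0 \<and> s' = 2 * pi \<and> t' = -t) \<or> (s = 2 * pi \<and> s' = 0 \<and> t' = -t)"
proof
  define r where "r = 2 + t * cos (s / 2)"
  define r' where "r' = 2 + t' * cos (s' / 2)"
  have "\<bar>t * cos (s / 2)\<bar> \<le> 1" "\<bar>t' * cos (s' / 2)\<bar> \<le> 1"
    using t abs_cos_le_one by (simp_all add: abs_mult mult_le_one)
  then have r: "1 \<le> r" "1 \<le> r'" unfolding r_def r'_def by linarith+
  assume "moebius_param (s, t) = moebius_param (s', t')"
  then have e1: "r * cos s = r' * cos s'" and e2: "r * sin s = r' * sin s'"
    and e3: "t * sin (s / 2) = t' * sin (s' / 2)"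
    unfolding moebius_param_def r_def r'_def by auto
  have polar: "z\<^sup>2 = (z * cos a)\<^sup>2 + (z * sin a)\<^sup>2" for z a :: real
    by (simp add: power_mult_distrib flip: distrib_left)
  have "r\<^sup>2 = r'\<^sup>2" using polar[of r s] polar[of r' s'] e1 e2 by simp
  then have rr: "r = r'" using r by (simp add: power2_eq_iff_nonneg)
  then have "cos s = cos s'" "sin s = sin s'" using e1 e2 r by auto
  from cos_sin_eq_imp_0_2pi[OF s this]
  show "(s = s' \<and> t = t') \<or> (s = 0 \<and> s' = 2 * pi \<and> t' = -t) \<or> (s = 2 * pi \<and> s' = 0 \<and> t' = -t)"
  proof (elim disjE conjE)
    assume ss: "s = s'"
    have "(t - t') * cos (s / 2) = 0" "(t - t') * sin (s / 2) = 0"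
      using rr e3 unfolding r_def r'_def ss by (simp_all add: algebra_simps)
    moreover have "\<not> (cos (s / 2) = 0 \<and> sin (s / 2) = 0)"
    proof
      assume "cos (s / 2) = 0 \<and> sin (s / 2) = 0"
      then show False using sin_cos_squared_add[of "s / 2"] by simp
    qed
    ultimately show ?thesis using ss by auto
  qed (use rr in \<open>auto simp: r_def r'_def\<close>)
next
  assume "(s = s' \<and> t = t') \<or> (s = 0 \<and> s' = 2 * pi \<and> t' = -t) \<or> (s = 2 * pi \<and> s' = 0 \<and> t' = -t)"
  then show "moebius_param (s, t) = moebius_param (s', t')" unfolding moebius_param_def by auto
qed

lemma moebius_map_eq_iff:
  assumes N: "0 < N" "odd N" and p: "p \<in> strip_rect N" and q: "q \<in> strip_rect N"
  shows "moebius_map N p = moebius_map N q \<longleftrightarrow> band_rel (int N) p q"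
proof -
  obtain x y x' y' where xy: "p = (x, y)" "q = (x', y')" by fastforce
  have x: "0 \<le> x" "x \<le> real N" "0 \<le> x'" "x' \<le> real N" and y: "\<bar>2 * y - 1\<bar> \<le> 1" "\<bar>2 * y' - 1\<bar> \<le> 1"
    using p q xy by (auto simp: strip_rect_def)
  have "moebius_map N p = moebius_map N q \<longleftrightarrow>
      moebius_param (turn N x, 2 * y - 1) = moebius_param (turn N x', 2 * y' - 1)"
    by (simp add: xy moebius_map_def)
  also have "\<dots> \<longleftrightarrow> band_rel (int N) p q"
    unfolding moebius_param_eq_iff[OF turn_bounds[OF N(1) x(1,2)] turn_bounds[OF N(1) x(3,4)] y]
    using N by (auto simp: xy band_rel_def flip_def turn_eq_iff)
  finally show ?thesis .
qed

lemma strip_complex_homeomorphic: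
  assumes "5 \<le> N"
  shows "even N \<Longrightarrow> geom_real (circ_complex 1 1 (N - 2)) homeomorphic cylinder"
    and "odd N \<Longrightarrow> geom_real (circ_complex 1 1 (N - 2)) homeomorphic moebius_band"
proof -
  have N: "0 < N" "3 \<le> N" using assms by simp_all
  have rect: "compact (strip_rect N)" unfolding strip_rect_def by (intro compact_Times compact_Icc)
  note strip = strip_map_eq_iff[OF assms]
  show "geom_real (circ_complex 1 1 (N - 2)) homeomorphic cylinder" if "even N"
  proof -
    have "strip_map (int N) ` strip_rect N homeomorphic cylinder_map N ` strip_rect N"
      by (rule homeomorphic_images_same_fibres[OF rect continuous_on_strip_map continuous_on_cylinder_map])
        (simp add: strip cylinder_map_eq_iff[OF N(1) that])
    then show ?thesis unfolding strip_map_image[OF N(2)] cylinder_map_image[OF N(1)] .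
  qed
  show "geom_real (circ_complex 1 1 (N - 2)) homeomorphic moebius_band" if "odd N"
  proof -
    have "strip_map (int N) ` strip_rect N homeomorphic moebius_map N ` strip_rect N"
      by (rule homeomorphic_images_same_fibres[OF rect continuous_on_strip_map continuous_on_moebius_map])
        (simp add: strip moebius_map_eq_iff[OF N(1) that])
    then show ?thesis unfolding strip_map_image[OF N(2)] moebius_map_image[OF N(1)] .
  qed
qed

lemma circ_complex_isosceles_homeomorphic:
  assumes "0 < a" "2 * a \<le> N" "5 \<le> N" "coprime a N"
  shows "even N \<Longrightarrow> geom_real (circ_complex a a (N - 2 * a)) homeomorphic cylinder"
    and "odd N \<Longrightarrow> geom_real (circ_complex a a (N - 2 * a)) homeomorphic moebius_band"
  using homeomorphic_trans[OF circ_complex_isosceles_relabel[OF assms(1,2,4)]]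
    strip_complex_homeomorphic[OF assms(3)] by blast+

theorem theorem6p10:
  fixes n k :: nat
  assumes "0 < n" and "0 < k" and "coprime n k"
  shows "(let N = 3 * n + k in
           2 * (n + k) \<noteq> N \<longrightarrow>
             (if even N then geom_real (circ_complex n n (n + k)) homeomorphic cylinder
              else geom_real (circ_complex n n (n + k)) homeomorphic moebius_band))
       \<and> (let N = 3 * n + 2 * k in
             (if even N then geom_real (circ_complex n (n + k) (n + k)) homeomorphic cylinder
              else geom_real (circ_complex n (n + k) (n + k)) homeomorphic moebius_band))"
proof -
  have "coprime n (3 * n + k)" using assms(3) by (simp add: coprime_iff_gcd_eq_1 gcd_add_mult)
  moreover have "coprime (n + k) (3 * n + 2 * k)"
  proof -
    have "gcd (n + k) (3 * n + 2 * k) = gcd (n + k) n"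
      using gcd_add_mult[of "n + k" 2 n] by (simp add: algebra_simps)
    also have "\<dots> = gcd n k"
      using gcd_add_mult[of n 1 k] by (simp add: gcd.commute add.commute)
    finally show ?thesis using assms(3) by (simp add: coprime_iff_gcd_eq_1)
  qed
  moreover have "circ_complex n (n + k) (n + k) = circ_complex (n + k) (n + k) n"
    by (rule circ_complex_rotate)
  ultimately show ?thesis
    using circ_complex_isosceles_homeomorphic[of n "3 * n + k"]
      circ_complex_isosceles_homeomorphic[of "n + k" "3 * n + 2 * k"] assms(1,2)
    by (auto simp: Let_def)
qed

end
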